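(* Let $k\ge 3$, let $w$ be a word over $\Sigma=\{a,b\}$, and let $j\ge k$ be a forbidden position in $w$ with respect to $S_k$. Then the position $j-k$ is forbidden in $w$ with respect to $S_k$ if and only if either $j-1$ is forbidden in $w$ or $w[j-k+1..j-1]\in\{a^{k-1},b^{k-1}\}$.
   Context: $\Sigma=\{a,b\}$. For $k\ge 3$, $S_k=\left(\Sigma^k\setminus\{ba^{k-1},b^{k-1}a\}\right)\cup\left(\Sigma^{k-1}\setminus\{a^{k-1},b^{k-1}\}\right)$. For a set $S$ of words, $\mathit{Pref}(S^* )$ is the set of all prefixes (including the empty word) of words in $S^*$. For a word $w=w_1\cdots w_n$ and indices $i,j$, $w[i..j]=w_iw_{i+1}\cdots w_j$ if $i\le j$ and the empty word if $i>j$. A position $j$ with $0\le j\le n-1$ is forbidden in $w$ (with respect to $S_k$) if $w[j+1..n]\notin\mathit{Pref}(S_k^* )$, i.e. the suffix of $w$ obtained by deleting the first $j$ letters is not a prefix of any word in $S_k^*$. *)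

theory Defs
  imports Main
begin

datatype sigma = a | b

type_synonym word = "sigma list"

definition S :: "nat \<Rightarrow> word set" where
  "S k = ({u. length u = k} - {b # replicate (k - 1) a, replicate (k - 1) b @ [a]})
       \<union> ({u. length u = k - 1} - {replicate (k - 1) a, replicate (k - 1) b})"

definition star :: "word set \<Rightarrow> word set" where
  "star L = {concat ws | ws. set ws \<subseteq> L}"

definition Pref :: "word set \<Rightarrow> word set" where
  "Pref L = {u. \<exists>v. u @ v \<in> L}"

text \<open>Position j (0 <= j <= n-1) is forbidden in w w.r.t. S_k iff the suffix of w obtained
  by deleting the first j letters, i.e. w[j+1..n], is not in Pref(S_k^*).\<close>
definition forbidden :: "nat \<Rightarrow> word \<Rightarrow> nat \<Rightarrow> bool" where
  "forbidden k w j \<longleftrightarrow> j < length w \<and> drop j w \<notin> Pref (star (S k))"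

text \<open>Factor w[i..j] with 1-based indices (empty if i > j).\<close>
definition factor :: "word \<Rightarrow> nat \<Rightarrow> nat \<Rightarrow> word" where
  "factor w i j = take (j + 1 - i) (drop (i - 1) w)"

end

theory Submission
  imports Defs
begin

(* Write P = Pref(S_k^* ), and for a forbidden position j >= k split the
   suffix of w starting after position j-k as  x @ c # v  with  x = w[j-k+1..j-1]
   (of length k-1),  c = w_j  and  v = w[j+1..n] \<notin> P.  Since every word of S_k has
   length k or k-1, a factorisation of  x @ c # v  into a first block of S_k and a
   word of P must cut after x (length k-1) or after x @ [c] (length k); the latter is
   impossible because v \<notin> P.  Hence  x @ c # v \<in> P  iff  c # v \<in> P  and  x \<in> S_k,
   and a word of length k-1 lies in S_k exactly when it is not a^(k-1) or b^(k-1). *)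

lemma Nil_in_Pref_star: "[] \<in> Pref (star L)"
  unfolding Pref_def star_def by (auto intro!: exI[of _ "[]"])

lemma Pref_star_prepend:
  assumes "s \<in> L" and "y \<in> Pref (star L)"
  shows "s @ y \<in> Pref (star L)"
proof -
  obtain v ws where "y @ v = concat ws" and "set ws \<subseteq> L"
    using assms(2) unfolding Pref_def star_def by auto
  then have "(s @ y) @ v = concat (s # ws)" and "set (s # ws) \<subseteq> L"
    using assms(1) by auto
  then show ?thesis unfolding Pref_def star_def by blast
qed

lemma Pref_star_split:
  assumes "u \<in> Pref (star L)" and "u \<noteq> []" and "\<forall>s\<in>L. length s \<le> length u"
  shows "\<exists>s y. s \<in> L \<and> u = s @ y \<and> y \<in> Pref (star L)"
proof -
  obtain v ws where cat: "u @ v = concat ws" and ws: "set ws \<subseteq> L"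
    using assms(1) unfolding Pref_def star_def by auto
  then obtain s ws' where ws_eq: "ws = s # ws'"
    using assms(2) by (cases ws) auto
  have s: "s \<in> L" and ws': "set ws' \<subseteq> L" using ws ws_eq by auto
  have cat': "u @ v = s @ concat ws'" using cat ws_eq by simp
  have len: "length s \<le> length u" using assms(3) s by blast
  then have "take (length s) u = s"
    using arg_cong[OF cat', of "take (length s)"] by simp
  then have "u = s @ drop (length s) u" by (metis append_take_drop_id)
  moreover have "drop (length s) u @ v = concat ws'"
    using arg_cong[OF cat', of "drop (length s)"] len by simp
  ultimately show ?thesis using s ws' unfolding Pref_def star_def by blast
qed

lemma S_length: "s \<in> S k \<Longrightarrow> length s = k \<or> length s = k - 1"
  unfolding S_def by auto

lemma S_short_iff:
  assumes "k \<ge> 1" and "length x = k - 1"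
  shows "x \<in> S k \<longleftrightarrow> x \<notin> {replicate (k - 1) a, replicate (k - 1) b}"
  using assms unfolding S_def by auto

lemma Pref_S_step:
  assumes "k \<ge> 1" and "length x = k - 1" and "v \<notin> Pref (star (S k))"
  shows "x @ c # v \<in> Pref (star (S k)) \<longleftrightarrow> c # v \<in> Pref (star (S k)) \<and> x \<in> S k"
proof
  assume "c # v \<in> Pref (star (S k)) \<and> x \<in> S k"
  then show "x @ c # v \<in> Pref (star (S k))" using Pref_star_prepend by blast
next
  assume xcv: "x @ c # v \<in> Pref (star (S k))"
  have "v \<noteq> []" using assms(3) Nil_in_Pref_star by metis
  then have "\<forall>s\<in>S k. length s \<le> length (x @ c # v)"
    using assms(1,2) S_length by fastforce
  then obtain s y where s: "s \<in> S k" and split: "x @ c # v = s @ y"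
      and y: "y \<in> Pref (star (S k))"
    using Pref_star_split[OF xcv] by blast
  from S_length[OF s] show "c # v \<in> Pref (star (S k)) \<and> x \<in> S k"
  proof
    assume "length s = k"
    then have "y = v"
      using arg_cong[OF split, of "drop k"] assms(1,2) by simp
    then show ?thesis using y assms(3) by simp
  qed (use split assms(2) s y in \<open>auto simp: append_eq_append_conv_if\<close>)
qed

lemma drop_factor_decomp:
  assumes "1 \<le> k" and "k \<le> j" and "j < length w"
  shows "length (factor w (j - k + 1) (j - 1)) = k - 1"
    and "drop (j - 1) w = w ! (j - 1) # drop j w"
    and "drop (j - k) w = factor w (j - k + 1) (j - 1) @ drop (j - 1) w"
proof -
  have fac: "factor w (j - k + 1) (j - 1) = take (k - 1) (drop (j - k) w)"
    unfolding factor_def using assms(1,2) by (simp add: Suc_diff_le)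
  then show "length (factor w (j - k + 1) (j - 1)) = k - 1" using assms by simp
  show "drop (j - 1) w = w ! (j - 1) # drop j w"
  proof -
    have "j - 1 < length w" and "Suc (j - 1) = j" using assms by auto
    then show ?thesis by (metis Cons_nth_drop_Suc)
  qed
  have "drop (k - 1) (drop (j - k) w) = drop (j - 1) w" using assms(1,2) by simp
  then show "drop (j - k) w = factor w (j - k + 1) (j - 1) @ drop (j - 1) w"
    using fac append_take_drop_id by metis
qed

theorem lemma1:
  fixes k j :: nat and w :: word
  assumes "k \<ge> 3" and "j \<ge> k" and "forbidden k w j"
  shows "forbidden k w (j - k) \<longleftrightarrow>
           (forbidden k w (j - 1) \<or>
            factor w (j - k + 1) (j - 1) \<in> {replicate (k - 1) a, replicate (k - 1) b})"
proof -
  define x where "x = factor w (j - k + 1) (j - 1)"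
  have j: "j < length w" and v: "drop j w \<notin> Pref (star (S k))"
    using assms(3) unfolding forbidden_def by auto
  have k1: "1 \<le> k" using assms(1) by simp
  note decomp = drop_factor_decomp[OF k1 assms(2) j, folded x_def]
  have "forbidden k w (j - k) \<longleftrightarrow> x @ w ! (j - 1) # drop j w \<notin> Pref (star (S k))"
    using j decomp(2,3) unfolding forbidden_def by auto
  also have "\<dots> \<longleftrightarrow> w ! (j - 1) # drop j w \<notin> Pref (star (S k)) \<or> x \<notin> S k"
    using Pref_S_step[OF k1 decomp(1) v] by blast
  also have "\<dots> \<longleftrightarrow> forbidden k w (j - 1) \<or> x \<in> {replicate (k - 1) a, replicate (k - 1) b}"
    using j decomp(2) S_short_iff[OF k1 decomp(1)] unfolding forbidden_def by auto
  finally show ?thesis unfolding x_def .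
qed

end
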